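(* Let $w$ satisfy Assumption A, $\rho\in\mathcal P(I)$, $r>0$, and let $\gamma\in\Pi(\rho)$ be an optimal plan for $F_{\rm OT}(\rho)$. Suppose $\kappa(\rho;r)<\frac1n$. If $\beta,h>0$ satisfy $h>2(n-1)M(\beta/2),\qquad m(\beta)>\frac{F_{\rm OT}(\rho)}{1-n\kappa(\rho;r)},\qquad \beta/2\le r,$ then $\gamma(D^h_w)=0$.
   Context: $I=[0,2\pi]$, $I_n=I^n$, $|t|_{\mathbb T}=\min\{|t-k|:k\in2\pi\mathbb Z\}$. Assumption A: $w:I\times I\to[0,+\infty]$ symmetric, continuous (topology of $[0,+\infty]$), with $\{w=\infty\}=\{(x,y):|x-y|_{\mathbb T}=0\}$. $c_n(x)=\sum_{i\ne j}w(x_i,x_j)$; $\Pi(\rho)$ = probability measures on $I_n$ with all marginals $\rho$; $F_{\rm OT}(\rho)=\min_{\Pi(\rho)}\int c_n\,d\gamma$. For $t\in(0,\pi]$: $m(t)=\inf\{w(x,y):|x-y|_{\mathbb T}\le t\}$, $M(t)=\sup\{w(x,y):|x-y|_{\mathbb T}\ge t\}$. Periodic concentration: $\kappa(\rho,r)=\sup_{x\in I}\rho(\{y:|x-y|_{\mathbb T}<r\})$. $D^h_w=\{x\in I_n:w(x_j,x_k)>h\text{ for some }j\ne k\}$. *)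

theory Defs
  imports "HOL-Probability.Probability"
begin

definition Iint :: "real set" where
  "Iint = {0..2*pi}"

definition MI :: "real measure" where
  "MI = restrict_space borel Iint"

definition tdist :: "real \<Rightarrow> real \<Rightarrow> real" where
  "tdist x y = (INF k::int. \<bar>x - y - 2 * pi * of_int k\<bar>)"

text \<open>Assumption A on w : I x I -> [0, +infinity] (values outside I x I irrelevant).\<close>
definition assumptionA :: "(real \<Rightarrow> real \<Rightarrow> ennreal) \<Rightarrow> bool" where
  "assumptionA w \<longleftrightarrow>
     (\<forall>x\<in>Iint. \<forall>y\<in>Iint. w x y = w y x) \<and>
     continuous_on (Iint \<times> Iint) (\<lambda>(x, y). w x y) \<and>
     {(x, y). x \<in> Iint \<and> y \<in> Iint \<and> w x y = \<infinity>} =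
       {(x, y). x \<in> Iint \<and> y \<in> Iint \<and> tdist x y = 0}"

definition cost :: "(real \<Rightarrow> real \<Rightarrow> ennreal) \<Rightarrow> nat \<Rightarrow> (nat \<Rightarrow> real) \<Rightarrow> ennreal" where
  "cost w n x = (\<Sum>i\<in>{..<n}. \<Sum>j\<in>{..<n} - {i}. w (x i) (x j))"

definition MIn :: "nat \<Rightarrow> (nat \<Rightarrow> real) measure" where
  "MIn n = PiM {..<n} (\<lambda>_. MI)"

definition probI :: "real measure \<Rightarrow> bool" where
  "probI \<rho> \<longleftrightarrow> sets \<rho> = sets MI \<and> prob_space \<rho>"

definition plans :: "nat \<Rightarrow> real measure \<Rightarrow> (nat \<Rightarrow> real) measure set" where
  "plans n \<rho> = {\<gamma>. sets \<gamma> = sets (MIn n) \<and> prob_space \<gamma> \<and>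
                    (\<forall>i<n. distr \<gamma> MI (\<lambda>x. x i) = \<rho>)}"

definition F_OT :: "(real \<Rightarrow> real \<Rightarrow> ennreal) \<Rightarrow> nat \<Rightarrow> real measure \<Rightarrow> ennreal" where
  "F_OT w n \<rho> = (INF \<gamma>\<in>plans n \<rho>. \<integral>\<^sup>+ x. cost w n x \<partial>\<gamma>)"

definition m_w :: "(real \<Rightarrow> real \<Rightarrow> ennreal) \<Rightarrow> real \<Rightarrow> ennreal" where
  "m_w w t = (INF p\<in>{(x, y). x \<in> Iint \<and> y \<in> Iint \<and> tdist x y \<le> t}. w (fst p) (snd p))"

definition M_w :: "(real \<Rightarrow> real \<Rightarrow> ennreal) \<Rightarrow> real \<Rightarrow> ennreal" where
  "M_w w t = (SUP p\<in>{(x, y). x \<in> Iint \<and> y \<in> Iint \<and> tdist x y \<ge> t}. w (fst p) (snd p))"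

definition kappa :: "real measure \<Rightarrow> real \<Rightarrow> real" where
  "kappa \<rho> r = (SUP x\<in>Iint. measure \<rho> {y\<in>Iint. tdist x y < r})"

definition Dset :: "(real \<Rightarrow> real \<Rightarrow> ennreal) \<Rightarrow> nat \<Rightarrow> real \<Rightarrow> (nat \<Rightarrow> real) set" where
  "Dset w n h = {x \<in> space (MIn n). \<exists>j<n. \<exists>k<n. j \<noteq> k \<and> w (x j) (x k) > ennreal h}"

end

theory Submission
  imports Defs "HOL-Combinatorics.Transposition"
begin

(* Suppose \<gamma> charges the set where w(x_j, x_k) > h for some j \<noteq> k. Sample x and y
   independently from \<gamma> and an index m uniformly from {0..n-1}, and let z be y with the
   coordinates j and m exchanged. By Markov's inequality and F_OT < m(\<beta>)(1 - n \<kappa>), with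
   probability more than n \<kappa> the cost of y is below m(\<beta>), so its points are pairwise more
   than \<beta> apart; with probability at least 1 - n \<kappa> all of them avoid the r-ball around x_j.
   For such y a pigeonhole argument gives an m with y_m at distance at least \<beta>/2 from every
   x_l, l \<noteq> j, and this m is drawn with probability 1/n. On the resulting event of positive
   probability, exchanging x_j and z_j = y_m strictly lowers c(x) + c(z): the interactions of
   x_j in x exceed 2h, whereas in both new configurations the moved particle has 2(n-1)
   interactions bounded by M(\<beta>/2). Averaging the laws of the two exchanged configurations
   gives a plan with the same marginals, as every coordinate is only swapped between x and the
   permuted copy z of y, and with strictly smaller cost, contradicting optimality. *)

section \<open>Periodic distance\<close>

lemma tdist_le: "tdist x y \<le> \<bar>x - y - 2 * pi * of_int k\<bar>"
  unfolding tdist_def by (rule cINF_lower) (auto intro: bdd_belowI[where m=0])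

lemma tdist_greatest: "(\<And>k::int. c \<le> \<bar>x - y - 2 * pi * of_int k\<bar>) \<Longrightarrow> c \<le> tdist x y"
  unfolding tdist_def by (rule cINF_greatest) auto

lemma tdist_le_abs: "tdist x y \<le> \<bar>x - y\<bar>"
  using tdist_le[of x y 0] by simp

lemma tdist_commute: "tdist y x = tdist x y"
proof -
  have *: "tdist b a \<le> tdist a b" for a b
  proof (rule tdist_greatest)
    fix k :: int
    have "tdist b a \<le> \<bar>b - a - 2 * pi * of_int (-k)\<bar>" by (rule tdist_le)
    then show "tdist b a \<le> \<bar>a - b - 2 * pi * of_int k\<bar>" by simp
  qed
  show ?thesis using *[of x y] *[of y x] by simp
qed

lemma tdist_triangle: "tdist x z \<le> tdist x y + tdist y z"
proof -
  have "tdist x z - tdist y z \<le> tdist x y"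
  proof (rule tdist_greatest)
    fix k1 :: int
    have "tdist x z - \<bar>x - y - 2 * pi * of_int k1\<bar> \<le> tdist y z"
    proof (rule tdist_greatest)
      fix k2 :: int
      have "tdist x z \<le> \<bar>x - z - 2 * pi * of_int (k1 + k2)\<bar>" by (rule tdist_le)
      also have "\<dots> \<le> \<bar>x - y - 2 * pi * of_int k1\<bar> + \<bar>y - z - 2 * pi * of_int k2\<bar>"
        by (simp add: algebra_simps)
      finally show "tdist x z - \<bar>x - y - 2 * pi * of_int k1\<bar> \<le> \<bar>y - z - 2 * pi * of_int k2\<bar>"
        by simp
    qed
    then show "tdist x z - tdist y z \<le> \<bar>x - y - 2 * pi * of_int k1\<bar>" by simp
  qed
  then show ?thesis by simp
qed

lemma tdist_diff_le: "\<bar>tdist a b - tdist a' b'\<bar> \<le> \<bar>a - a'\<bar> + \<bar>b - b'\<bar>"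
proof -
  have "tdist a b \<le> tdist a a' + tdist a' b' + tdist b' b"
    using tdist_triangle[where x=a and y=a' and z=b] tdist_triangle[where x=a' and y=b' and z=b]
    by simp
  moreover have "tdist a' b' \<le> tdist a' a + tdist a b + tdist b b'"
    using tdist_triangle[where x=a' and y=a and z=b'] tdist_triangle[where x=a and y=b and z=b']
    by simp
  ultimately show ?thesis
    using tdist_le_abs[of a a'] tdist_le_abs[of b' b] tdist_le_abs[of a' a] tdist_le_abs[of b b']
    by (simp add: abs_minus_commute)
qed

lemma continuous_on_tdist: "continuous_on UNIV (\<lambda>p. tdist (fst p) (snd p))"
proof (rule lipschitz_on_continuous_on)
  show "2-lipschitz_on UNIV (\<lambda>p. tdist (fst p) (snd p))"
  proof (rule lipschitz_onI)
    fix p q :: "real \<times> real"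
    have "\<bar>tdist (fst p) (snd p) - tdist (fst q) (snd q)\<bar> \<le> \<bar>fst p - fst q\<bar> + \<bar>snd p - snd q\<bar>"
      by (rule tdist_diff_le)
    also have "\<dots> \<le> dist p q + dist p q"
      using dist_fst_le[of p q] dist_snd_le[of p q] by (simp add: dist_real_def)
    finally show "dist (tdist (fst p) (snd p)) (tdist (fst q) (snd q)) \<le> 2 * dist p q"
      by (simp add: dist_real_def)
  qed simp
qed

lemma borel_measurable_tdist_pair: "(\<lambda>p. tdist (fst p) (snd p)) \<in> borel_measurable borel"
  using continuous_on_tdist by (intro borel_measurable_continuous_onI) simp

lemma borel_measurable_tdist [measurable (raw)]:
  assumes [measurable]: "f \<in> borel_measurable M" "g \<in> borel_measurable M"
  shows "(\<lambda>x. tdist (f x) (g x)) \<in> borel_measurable M"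
proof -
  have "(\<lambda>x. (f x, g x)) \<in> measurable M borel"
    unfolding borel_prod[symmetric] by measurable
  from measurable_compose[OF this borel_measurable_tdist_pair] show ?thesis by simp
qed

lemma pigeonhole_far_point:
  fixes x y :: "nat \<Rightarrow> real"
  assumes "j < n" and separated: "\<And>a b. a < n \<Longrightarrow> b < n \<Longrightarrow> a \<noteq> b \<Longrightarrow> \<beta> < tdist (y a) (y b)"
  shows "\<exists>m<n. \<forall>l<n. l \<noteq> j \<longrightarrow> \<beta> / 2 \<le> tdist (y m) (x l)"
proof (rule ccontr)
  assume "\<not> ?thesis"
  then have "\<forall>m\<in>{..<n}. \<exists>l. l \<in> {..<n} - {j} \<and> tdist (y m) (x l) < \<beta> / 2"
    by (auto simp: not_le)
  then obtain f where f: "\<And>m. m \<in> {..<n} \<Longrightarrow> f m \<in> {..<n} - {j} \<and> tdist (y m) (x (f m)) < \<beta> / 2"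
    by metis
  have "card (f ` {..<n}) \<le> card ({..<n} - {j})"
    using f by (intro card_mono) auto
  also have "\<dots> < card {..<n}" using \<open>j < n\<close> by simp
  finally have "\<not> inj_on f {..<n}" by (intro pigeonhole)
  then obtain a b where ab: "a < n" "b < n" "a \<noteq> b" "f a = f b"
    unfolding inj_on_def by auto
  have "tdist (y a) (y b) \<le> tdist (y a) (x (f a)) + tdist (y b) (x (f b))"
    using tdist_triangle[where x="y a" and y="x (f a)" and z="y b"] ab by (simp add: tdist_commute)
  also have "\<dots> < \<beta>" using f[of a] f[of b] ab by simp
  finally show False using separated[OF ab(1-3)] by simp
qed

lemma space_MI: "space MI = Iint"
  by (simp add: MI_def space_restrict_space)

lemma space_MIn: "space (MIn n) = PiE {..<n} (\<lambda>_. Iint)"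
  by (simp add: MIn_def space_PiM space_MI)

lemma measurable_MI_borel: "(\<lambda>x. x) \<in> measurable MI borel"
  unfolding MI_def by (rule measurable_restrict_space1) simp

lemma measurable_component_MIn: "i < n \<Longrightarrow> (\<lambda>x. x i) \<in> measurable (MIn n) MI"
  unfolding MIn_def by (rule measurable_component_singleton) simp

lemma borel_measurable_component_MIn [measurable]: "(\<lambda>x. x i) \<in> borel_measurable (MIn n)"
proof (cases "i < n")
  case True
  then show ?thesis
    using measurable_compose[OF measurable_component_MIn measurable_MI_borel] by simp
next
  case False
  then have "(\<lambda>x. x i) \<in> borel_measurable (MIn n) \<longleftrightarrow> (\<lambda>x. undefined :: real) \<in> borel_measurable (MIn n)"
    by (intro measurable_cong) (auto simp: space_MIn PiE_def extensional_def)
  then show ?thesis by simp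
qed

lemma measurable_MIn_single:
  assumes "\<And>i. i < n \<Longrightarrow> f i \<in> measurable N MI"
    and "\<And>\<omega>. \<omega> \<in> space N \<Longrightarrow> (\<lambda>i. f i \<omega>) \<in> space (MIn n)"
  shows "(\<lambda>\<omega> i. f i \<omega>) \<in> measurable N (MIn n)"
  unfolding MIn_def
  by (rule measurable_PiM_single') (use assms in \<open>auto simp: space_MIn space_MI MIn_def[symmetric]\<close>)

lemma measurable_fun_upd_MIn:
  assumes "j < n" and f: "f \<in> measurable N (MIn n)" and g: "g \<in> measurable N (MIn n)"
  shows "(\<lambda>\<omega>. (f \<omega>)(j := g \<omega> j)) \<in> measurable N (MIn n)"
proof -
  have "(\<lambda>\<omega> i. if i = j then g \<omega> j else f \<omega> i) \<in> measurable N (MIn n)"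
  proof (rule measurable_MIn_single)
    fix i assume "i < n"
    then show "(\<lambda>\<omega>. if i = j then g \<omega> j else f \<omega> i) \<in> measurable N MI"
      using measurable_compose[OF g measurable_component_MIn[OF \<open>j < n\<close>]]
        measurable_compose[OF f measurable_component_MIn] by auto
  next
    fix \<omega> assume "\<omega> \<in> space N"
    then have "f \<omega> \<in> space (MIn n)" "g \<omega> \<in> space (MIn n)"
      using f g by (auto simp: measurable_def)
    then show "(\<lambda>i. if i = j then g \<omega> j else f \<omega> i) \<in> space (MIn n)"
      using \<open>j < n\<close> by (auto simp: space_MIn PiE_def Pi_def extensional_def)
  qed
  then show ?thesis by (simp add: fun_upd_def)
qed

lemma borel_measurable_assumptionA:
  assumes "assumptionA w" "f \<in> borel_measurable M" "g \<in> borel_measurable M"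
    and "\<And>x. x \<in> space M \<Longrightarrow> f x \<in> Iint \<and> g x \<in> Iint"
  shows "(\<lambda>x. w (f x) (g x)) \<in> borel_measurable M"
proof -
  have w: "(\<lambda>(x, y). w x y) \<in> borel_measurable (restrict_space borel (Iint \<times> Iint))"
    using \<open>assumptionA w\<close> unfolding assumptionA_def
    by (intro borel_measurable_continuous_on_restrict) simp
  have "(\<lambda>x. (f x, g x)) \<in> measurable M borel"
    unfolding borel_prod[symmetric] using assms(2,3) by measurable
  then have "(\<lambda>x. (f x, g x)) \<in> measurable M (restrict_space borel (Iint \<times> Iint))"
    using assms(4) by (auto simp: measurable_restrict_space2_iff)
  from measurable_compose[OF this w] show ?thesis by simp
qed

lemma borel_measurable_assumptionA_components [measurable]:
  assumes "assumptionA w" "i < n" "l < n"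
  shows "(\<lambda>x. w (x i) (x l)) \<in> borel_measurable (MIn n)"
  by (rule borel_measurable_assumptionA[OF assms(1)]) (use assms in \<open>auto simp: space_MIn\<close>)

lemma borel_measurable_cost [measurable]:
  "assumptionA w \<Longrightarrow> cost w n \<in> borel_measurable (MIn n)"
  unfolding cost_def[abs_def] by (intro borel_measurable_sum borel_measurable_assumptionA_components) auto

lemma sets_Dset: "assumptionA w \<Longrightarrow> Dset w n h \<in> sets (MIn n)"
proof -
  assume [measurable]: "assumptionA w"
  have "Dset w n h = (\<Union>j\<in>{..<n}. \<Union>k\<in>{..<n}. {x \<in> space (MIn n). j \<noteq> k \<and> ennreal h < w (x j) (x k)})"
    unfolding Dset_def by auto
  also have "\<dots> \<in> sets (MIn n)"
    by (intro sets.finite_UN finite_lessThan ballI) measurable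
  finally show ?thesis .
qed

section \<open>Splitting the cost at one particle\<close>

definition cost_at :: "(real \<Rightarrow> real \<Rightarrow> ennreal) \<Rightarrow> nat \<Rightarrow> nat \<Rightarrow> (nat \<Rightarrow> real) \<Rightarrow> ennreal" where
  "cost_at w n j u = (\<Sum>l\<in>{..<n}-{j}. w (u j) (u l)) + (\<Sum>i\<in>{..<n}-{j}. w (u i) (u j))"

definition cost_off :: "(real \<Rightarrow> real \<Rightarrow> ennreal) \<Rightarrow> nat \<Rightarrow> nat \<Rightarrow> (nat \<Rightarrow> real) \<Rightarrow> ennreal" where
  "cost_off w n j u = (\<Sum>i\<in>{..<n}-{j}. \<Sum>l\<in>{..<n}-{i}-{j}. w (u i) (u l))"

lemma cost_split:
  assumes "j < n"
  shows "cost w n u = cost_at w n j u + cost_off w n j u"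
proof -
  have "cost w n u = (\<Sum>l\<in>{..<n}-{j}. w (u j) (u l)) + (\<Sum>i\<in>{..<n}-{j}. \<Sum>l\<in>{..<n}-{i}. w (u i) (u l))"
    unfolding cost_def using assms by (subst sum.remove[of _ j]) auto
  also have "(\<Sum>i\<in>{..<n}-{j}. \<Sum>l\<in>{..<n}-{i}. w (u i) (u l))
      = (\<Sum>i\<in>{..<n}-{j}. w (u i) (u j) + (\<Sum>l\<in>{..<n}-{i}-{j}. w (u i) (u l)))"
  proof (rule sum.cong)
    fix i assume "i \<in> {..<n} - {j}"
    then show "(\<Sum>l\<in>{..<n}-{i}. w (u i) (u l)) = w (u i) (u j) + (\<Sum>l\<in>{..<n}-{i}-{j}. w (u i) (u l))"
      using assms by (subst sum.remove[of _ j]) (auto simp: Diff_insert2[symmetric] insert_commute)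
  qed simp
  finally show ?thesis
    unfolding cost_at_def cost_off_def by (simp add: sum.distrib add.assoc)
qed

lemma cost_off_fun_upd [simp]: "cost_off w n j (u(j := v)) = cost_off w n j u"
  unfolding cost_off_def by (intro sum.cong refl) auto

lemma cost_comp_bij:
  assumes "bij_betw p {..<n} {..<n}"
  shows "cost w n (u \<circ> p) = cost w n u"
proof -
  have inj: "inj_on p {..<n}" and img: "p ` {..<n} = {..<n}"
    using assms by (auto simp: bij_betw_def)
  have inner: "(\<Sum>l\<in>{..<n}-{i}. w (u (p i)) (u (p l))) = (\<Sum>l\<in>{..<n}-{p i}. w (u (p i)) (u l))"
    if "i < n" for i
  proof -
    have "p ` ({..<n} - {i}) = {..<n} - {p i}"
      using inj img that by (auto simp: inj_on_image_set_diff)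
    then show ?thesis
      using sum.reindex[of p "{..<n}-{i}" "\<lambda>l. w (u (p i)) (u l)"]
      by (simp add: inj_on_subset[OF inj] comp_def)
  qed
  have "cost w n (u \<circ> p) = (\<Sum>i\<in>{..<n}. \<Sum>l\<in>{..<n}-{p i}. w (u (p i)) (u l))"
    unfolding cost_def comp_def by (rule sum.cong[OF refl]) (simp add: inner)
  also have "\<dots> = (\<Sum>i\<in>p ` {..<n}. \<Sum>l\<in>{..<n}-{i}. w (u i) (u l))"
    using sum.reindex[OF inj, of "\<lambda>i. \<Sum>l\<in>{..<n}-{i}. w (u i) (u l)"] by simp
  also have "\<dots> = cost w n u" unfolding cost_def img ..
  finally show ?thesis .
qed

lemma pair_le_cost:
  assumes "a < n" "b < n" "a \<noteq> b"
  shows "w (y a) (y b) \<le> cost w n y"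
proof -
  have "w (y a) (y b) \<le> (\<Sum>l\<in>{..<n}-{a}. w (y a) (y l))"
    by (rule member_le_sum) (use assms in auto)
  also have "\<dots> \<le> cost w n y"
    unfolding cost_def
    by (rule member_le_sum[where f="\<lambda>i. \<Sum>l\<in>{..<n}-{i}. w (y i) (y l)"]) (use assms in auto)
  finally show ?thesis .
qed

lemma cost_at_fun_upd_le:
  assumes "j < n" and bound: "\<And>l. l \<in> {..<n} - {j} \<Longrightarrow> w v (u l) \<le> B \<and> w (u l) v \<le> B"
  shows "cost_at w n j (u(j := v)) \<le> of_nat (n - 1) * B + of_nat (n - 1) * B"
proof -
  have card: "card ({..<n} - {j}) = n - 1" using \<open>j < n\<close> by simp
  have "cost_at w n j (u(j := v)) = (\<Sum>l\<in>{..<n}-{j}. w v (u l)) + (\<Sum>i\<in>{..<n}-{j}. w (u i) v)"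
    unfolding cost_at_def by (intro arg_cong2[where f="(+)"] sum.cong) auto
  also have "\<dots> \<le> of_nat (n - 1) * B + of_nat (n - 1) * B"
    by (intro add_mono; subst card[symmetric]; rule sum_bounded_above) (use bound in auto)
  finally show ?thesis .
qed

lemma pair_le_cost_at:
  assumes "k < n" "j \<noteq> k" "w (x k) (x j) = w (x j) (x k)"
  shows "w (x j) (x k) + w (x j) (x k) \<le> cost_at w n j x"
  unfolding cost_at_def
proof (rule add_mono)
  show "w (x j) (x k) \<le> (\<Sum>l\<in>{..<n}-{j}. w (x j) (x l))"
    by (rule member_le_sum) (use assms in auto)
  show "w (x j) (x k) \<le> (\<Sum>i\<in>{..<n}-{j}. w (x i) (x j))"
    by (subst assms(3)[symmetric], rule member_le_sum) (use assms in auto)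
qed

lemma cost_exchange_less:
  fixes x z :: "nat \<Rightarrow> real"
  assumes "j < n" "k < n" "j \<noteq> k"
    and sym: "w (x k) (x j) = w (x j) (x k)"
    and heavy: "2 * of_nat (n - 1) * B < w (x j) (x k)"
    and bound: "\<And>l. l \<in> {..<n} - {j} \<Longrightarrow>
      w (z j) (x l) \<le> B \<and> w (x l) (z j) \<le> B \<and> w (x j) (z l) \<le> B \<and> w (z l) (x j) \<le> B"
    and finite: "cost w n x \<noteq> \<infinity>" "cost w n z \<noteq> \<infinity>"
  shows "cost w n (x(j := z j)) + cost w n (z(j := x j)) < cost w n x + cost w n z"
proof -
  let ?B = "of_nat (n - 1) * B + of_nat (n - 1) * B"
  have "cost_at w n j (x(j := z j)) + cost_at w n j (z(j := x j)) \<le> ?B + ?B"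
    using bound by (intro add_mono cost_at_fun_upd_le[OF \<open>j < n\<close>]) auto
  also have "\<dots> < w (x j) (x k) + w (x j) (x k)"
    using heavy by (intro add_strict_mono) (simp_all add: algebra_simps mult_2)
  also have "\<dots> \<le> cost_at w n j x + cost_at w n j z"
    using pair_le_cost_at[OF assms(2,3) sym] by (simp add: add_increasing2)
  finally have at_less: "cost_at w n j (x(j := z j)) + cost_at w n j (z(j := x j))
      < cost_at w n j x + cost_at w n j z" .
  have "cost_off w n j x + cost_off w n j z \<noteq> \<infinity>"
    using finite cost_split[OF \<open>j < n\<close>, of w x] cost_split[OF \<open>j < n\<close>, of w z]
    by (auto simp: top_unique)
  with at_less show ?thesis
    using cost_split[OF \<open>j < n\<close>] by (simp add: algebra_simps ennreal_add_left_cancel_less)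
qed

lemma emeasure_pair_measure_neq_0_if_slices:
  assumes "sigma_finite_measure M" and N: "N \<in> sets (K \<Otimes>\<^sub>M M)" and A: "A \<in> sets K"
    and "emeasure K A \<noteq> 0" and slices: "\<And>x. x \<in> A \<Longrightarrow> emeasure M (Pair x -` N) \<noteq> 0"
  shows "emeasure (K \<Otimes>\<^sub>M M) N \<noteq> 0"
proof
  interpret M: sigma_finite_measure M by fact
  assume "emeasure (K \<Otimes>\<^sub>M M) N = 0"
  then have "(\<integral>\<^sup>+x. emeasure M (Pair x -` N) \<partial>K) = 0"
    using M.emeasure_pair_measure_alt[OF N] by simp
  then have "AE x in K. emeasure M (Pair x -` N) = 0"
    using M.measurable_emeasure_Pair[OF N] by (simp add: nn_integral_0_iff_AE)
  then have "AE x in K. x \<notin> A" using slices by (auto elim!: AE_mp)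
  then have "emeasure K A = 0"
    using A by (subst (asm) AE_iff_measurable[of A]) (auto dest: sets.sets_into_space)
  with \<open>emeasure K A \<noteq> 0\<close> show False by simp
qed

definition fair_coin :: "bool measure" where
  "fair_coin = measure_pmf (pmf_of_set UNIV)"

definition coin_mixture :: "'a measure \<Rightarrow> 'b measure \<Rightarrow> ('a \<Rightarrow> 'b) \<Rightarrow> ('a \<Rightarrow> 'b) \<Rightarrow> 'b measure" where
  "coin_mixture \<Omega> N X Y = distr (\<Omega> \<Otimes>\<^sub>M fair_coin) N (\<lambda>(\<omega>, b). if b then X \<omega> else Y \<omega>)"

lemma sets_coin_mixture [simp]: "sets (coin_mixture \<Omega> N X Y) = sets N"
  by (simp add: coin_mixture_def)

lemma measurable_coin_choice:
  assumes "X \<in> measurable \<Omega> N" "Y \<in> measurable \<Omega> N"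
  shows "(\<lambda>(\<omega>, b). if b then X \<omega> else Y \<omega>) \<in> measurable (\<Omega> \<Otimes>\<^sub>M fair_coin) N"
proof -
  have "{p \<in> space (\<Omega> \<Otimes>\<^sub>M fair_coin). snd p} = space \<Omega> \<times> {True}"
    by (auto simp: space_pair_measure fair_coin_def)
  also have "\<dots> \<in> sets (\<Omega> \<Otimes>\<^sub>M fair_coin)"
    by (intro pair_measureI) (auto simp: fair_coin_def)
  finally have "(\<lambda>p. if snd p then X (fst p) else Y (fst p)) \<in> measurable (\<Omega> \<Otimes>\<^sub>M fair_coin) N"
    using assms by (intro measurable_If) auto
  then show ?thesis by (simp add: case_prod_beta')
qed

lemma prob_space_coin_mixture:
  assumes "prob_space \<Omega>" "X \<in> measurable \<Omega> N" "Y \<in> measurable \<Omega> N"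
  shows "prob_space (coin_mixture \<Omega> N X Y)"
  unfolding coin_mixture_def fair_coin_def
  using measurable_coin_choice[OF assms(2,3)]
  by (intro prob_space.prob_space_distr prob_space_pair assms(1) prob_space_measure_pmf)
     (simp add: fair_coin_def)

lemma nn_integral_coin_mixture:
  assumes X: "X \<in> measurable \<Omega> N" and Y: "Y \<in> measurable \<Omega> N" and f: "f \<in> borel_measurable N"
  shows "integral\<^sup>N (coin_mixture \<Omega> N X Y) f = (\<integral>\<^sup>+\<omega>. f (X \<omega>) + f (Y \<omega>) \<partial>\<Omega>) / 2"
proof -
  interpret coin: prob_space fair_coin
    unfolding fair_coin_def by (rule prob_space_measure_pmf)
  note choice = measurable_coin_choice[OF X Y]
  have "integral\<^sup>N (coin_mixture \<Omega> N X Y) f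
      = (\<integral>\<^sup>+p. f ((\<lambda>(\<omega>, b). if b then X \<omega> else Y \<omega>) p) \<partial>(\<Omega> \<Otimes>\<^sub>M fair_coin))"
    unfolding coin_mixture_def using choice f by (intro nn_integral_distr) auto
  also have "\<dots> = (\<integral>\<^sup>+\<omega>. \<integral>\<^sup>+b. f (if b then X \<omega> else Y \<omega>) \<partial>fair_coin \<partial>\<Omega>)"
    using coin.nn_integral_fst[OF measurable_compose[OF choice f]]
    by (simp add: case_prod_beta' cong: if_cong)
  also have "\<dots> = (\<integral>\<^sup>+\<omega>. (f (X \<omega>) + f (Y \<omega>)) / 2 \<partial>\<Omega>)"
  proof (rule nn_integral_cong)
    fix \<omega>
    have "(\<integral>\<^sup>+b. f (if b then X \<omega> else Y \<omega>) \<partial>fair_coin)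
        = (\<Sum>b\<in>UNIV. f (if b then X \<omega> else Y \<omega>)) / of_nat (card (UNIV :: bool set))"
      unfolding fair_coin_def by (rule nn_integral_pmf_of_set) auto
    then show "(\<integral>\<^sup>+b. f (if b then X \<omega> else Y \<omega>) \<partial>fair_coin) = (f (X \<omega>) + f (Y \<omega>)) / 2"
      by (simp add: UNIV_bool add.commute)
  qed
  also have "\<dots> = (\<integral>\<^sup>+\<omega>. f (X \<omega>) + f (Y \<omega>) \<partial>\<Omega>) / 2"
    using measurable_compose[OF X f] measurable_compose[OF Y f] by (intro nn_integral_divide) auto
  finally show ?thesis .
qed

lemma nn_integral_fst_prob_pair:
  assumes "prob_space M" "f \<in> borel_measurable N"
  shows "(\<integral>\<^sup>+p. f (fst p) \<partial>(N \<Otimes>\<^sub>M M)) = integral\<^sup>N N f"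
proof -
  interpret M: prob_space M by fact
  have "integral\<^sup>N N f = integral\<^sup>N (distr (N \<Otimes>\<^sub>M M) N fst) f"
    by (simp add: M.distr_pair_fst)
  also have "\<dots> = (\<integral>\<^sup>+p. f (fst p) \<partial>(N \<Otimes>\<^sub>M M))"
    using assms(2) by (intro nn_integral_distr) auto
  finally show ?thesis ..
qed

lemma nn_integral_snd_prob_pair:
  assumes "prob_space K" "sigma_finite_measure M" "f \<in> borel_measurable M"
  shows "(\<integral>\<^sup>+p. f (snd p) \<partial>(K \<Otimes>\<^sub>M M)) = integral\<^sup>N M f"
proof -
  interpret K: prob_space K by fact
  interpret M: sigma_finite_measure M by fact
  have "(\<integral>\<^sup>+p. f (snd p) \<partial>(K \<Otimes>\<^sub>M M)) = (\<integral>\<^sup>+x. \<integral>\<^sup>+y. f y \<partial>M \<partial>K)"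
    using M.nn_integral_fst[of "\<lambda>p. f (snd p)" K] assms(3) by simp
  also have "\<dots> = integral\<^sup>N M f"
    by (simp add: K.emeasure_space_1)
  finally show ?thesis .
qed

lemma nn_integral_plans_component:
  assumes "\<gamma> \<in> plans n \<rho>" "i < n" "S \<in> sets MI"
  shows "(\<integral>\<^sup>+y. indicator S (y i) \<partial>\<gamma>) = emeasure \<rho> S"
proof -
  have marginal: "distr \<gamma> MI (\<lambda>y. y i) = \<rho>" and "sets \<gamma> = sets (MIn n)"
    using assms(1,2) by (auto simp: plans_def)
  then have "(\<lambda>y. y i) \<in> measurable \<gamma> MI"
    using measurable_component_MIn[OF assms(2)] by (simp cong: measurable_cong_sets)
  then have "(\<integral>\<^sup>+y. indicator S (y i) \<partial>\<gamma>) = integral\<^sup>N (distr \<gamma> MI (\<lambda>y. y i)) (indicator S)"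
    using assms(3) by (intro nn_integral_distr[symmetric]) auto
  also have "\<dots> = emeasure \<rho> S"
    using assms(3) marginal by (metis nn_integral_indicator sets_distr)
  finally show ?thesis .
qed

lemma plansI:
  assumes "sets \<gamma> = sets (MIn n)" "prob_space \<gamma>" "sets \<rho> = sets MI"
    and components: "\<And>i S. i < n \<Longrightarrow> S \<in> sets MI \<Longrightarrow> (\<integral>\<^sup>+y. indicator S (y i) \<partial>\<gamma>) = emeasure \<rho> S"
  shows "\<gamma> \<in> plans n \<rho>"
proof -
  have "distr \<gamma> MI (\<lambda>y. y i) = \<rho>" if "i < n" for i
  proof (rule measure_eqI)
    fix S assume "S \<in> sets (distr \<gamma> MI (\<lambda>y. y i))"
    then have S: "S \<in> sets MI" by simp
    have "(\<lambda>y. y i) \<in> measurable \<gamma> MI"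
      using measurable_component_MIn[OF \<open>i < n\<close>] assms(1) by (simp cong: measurable_cong_sets)
    then have "emeasure (distr \<gamma> MI (\<lambda>y. y i)) S = (\<integral>\<^sup>+y. indicator S (y i) \<partial>\<gamma>)"
      using S nn_integral_distr[of "\<lambda>y. y i" \<gamma> MI "indicator S"]
      by (metis nn_integral_indicator borel_measurable_indicator sets_distr)
    then show "emeasure (distr \<gamma> MI (\<lambda>y. y i)) S = emeasure \<rho> S"
      using components[OF \<open>i < n\<close> S] by simp
  qed (use assms(3) in simp)
  with assms(1,2) show ?thesis by (simp add: plans_def)
qed

section \<open>Exchanging a coordinate with a permuted independent copy\<close>

type_synonym sample_triple = "(nat \<Rightarrow> real) \<times> (nat \<Rightarrow> real) \<times> nat"

locale exchange_setting =
  fixes n j :: nat and \<rho> :: "real measure" and \<gamma> :: "(nat \<Rightarrow> real) measure"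
  assumes j_less: "j < n" and probI_\<rho>: "probI \<rho>" and plan: "\<gamma> \<in> plans n \<rho>"
begin

lemma sets_\<gamma>: "sets \<gamma> = sets (MIn n)"
  using plan by (simp add: plans_def)

sublocale \<gamma>: prob_space \<gamma>
  using plan by (simp add: plans_def)

definition uniform_index :: "nat measure" where
  "uniform_index = measure_pmf (pmf_of_set {..<n})"

sublocale index: prob_space uniform_index
  unfolding uniform_index_def by (rule prob_space_measure_pmf)

definition triples :: "sample_triple measure" where
  "triples = \<gamma> \<Otimes>\<^sub>M (\<gamma> \<Otimes>\<^sub>M uniform_index)"

sublocale triples: prob_space triples
  unfolding triples_def by (intro prob_space_pair \<gamma>.prob_space_axioms index.prob_space_axioms)

lemma sets_sample_index: "sets (\<gamma> \<Otimes>\<^sub>M uniform_index) = sets (MIn n \<Otimes>\<^sub>M count_space UNIV)"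
  using sets_\<gamma> by (intro sets_pair_measure_cong) (auto simp: uniform_index_def)

lemma measurable_fst_triples [measurable]: "fst \<in> measurable triples (MIn n)"
  using measurable_fst[of \<gamma> "\<gamma> \<Otimes>\<^sub>M uniform_index"] sets_\<gamma>
  unfolding triples_def by (simp cong: measurable_cong_sets)

lemma measurable_snd_triples [measurable]:
  "snd \<in> measurable triples (MIn n \<Otimes>\<^sub>M count_space UNIV)"
  using measurable_snd[of \<gamma> "\<gamma> \<Otimes>\<^sub>M uniform_index"] sets_sample_index
  unfolding triples_def by (simp cong: measurable_cong_sets)

(* For m \<ge> n, an event of probability zero, y is left unchanged so that permuted y m stays in
   space (MIn n). *)
definition permuted :: "(nat \<Rightarrow> real) \<Rightarrow> nat \<Rightarrow> nat \<Rightarrow> real" where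
  "permuted y m = (if m < n then y \<circ> Transposition.transpose j m else y)"

lemma permuted_at_j: "m < n \<Longrightarrow> permuted y m j = y m"
  by (simp add: permuted_def)

lemma permuted_component: "i < n \<Longrightarrow> \<exists>i'<n. permuted y m i = y i'"
  using j_less by (auto simp: permuted_def Transposition.transpose_def)

lemma permuted_in_space: "y \<in> space (MIn n) \<Longrightarrow> permuted y m \<in> space (MIn n)"
  using j_less
  by (auto simp: permuted_def space_MIn PiE_def Pi_def extensional_def Transposition.transpose_def)

lemma cost_permuted [simp]: "cost w n (permuted y m) = cost w n y"
  using j_less by (simp add: permuted_def cost_comp_bij)

lemma measurable_permuted:
  "(\<lambda>p. permuted (fst p) (snd p)) \<in> measurable (MIn n \<Otimes>\<^sub>M count_space UNIV) (MIn n)"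
proof (rule measurable_compose_countable[where f="\<lambda>m p. permuted (fst p) m"])
  fix m :: nat
  show "(\<lambda>p. permuted (fst p) m) \<in> measurable (MIn n \<Otimes>\<^sub>M count_space UNIV) (MIn n)"
  proof (cases "m < n")
    case True
    have "(\<lambda>p i. fst p (Transposition.transpose j m i)) \<in> measurable (MIn n \<Otimes>\<^sub>M count_space UNIV) (MIn n)"
    proof (rule measurable_MIn_single)
      fix i assume "i < n"
      then have "(\<lambda>y. y (Transposition.transpose j m i)) \<in> measurable (MIn n) MI"
        using True j_less by (intro measurable_component_MIn) (simp add: Transposition.transpose_def)
      then show "(\<lambda>p. fst p (Transposition.transpose j m i)) \<in> measurable (MIn n \<Otimes>\<^sub>M count_space UNIV) MI"
        by measurable
    qed (use permuted_in_space[of _ m] True in \<open>auto simp: space_pair_measure permuted_def comp_def\<close>)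
    then show ?thesis using True by (simp add: permuted_def comp_def)
  qed (simp add: permuted_def)
qed simp

definition permuted_sample :: "sample_triple \<Rightarrow> nat \<Rightarrow> real" where
  "permuted_sample \<omega> = permuted (fst (snd \<omega>)) (snd (snd \<omega>))"

lemma measurable_permuted_sample [measurable]: "permuted_sample \<in> measurable triples (MIn n)"
  using measurable_compose[OF measurable_snd_triples measurable_permuted]
  by (simp add: permuted_sample_def[abs_def])

definition exchanged_fst :: "sample_triple set \<Rightarrow> sample_triple \<Rightarrow> nat \<Rightarrow> real" where
  "exchanged_fst E \<omega> = (if \<omega> \<in> E then (fst \<omega>)(j := permuted_sample \<omega> j) else fst \<omega>)"

definition exchanged_snd :: "sample_triple set \<Rightarrow> sample_triple \<Rightarrow> nat \<Rightarrow> real" where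
  "exchanged_snd E \<omega> = (if \<omega> \<in> E then (permuted_sample \<omega>)(j := fst \<omega> j) else permuted_sample \<omega>)"

lemma measurable_exchanged:
  assumes "E \<in> sets triples"
  shows "exchanged_fst E \<in> measurable triples (MIn n)" "exchanged_snd E \<in> measurable triples (MIn n)"
proof -
  have "(\<lambda>\<omega>. (fst \<omega>)(j := permuted_sample \<omega> j)) \<in> measurable triples (MIn n)"
    "(\<lambda>\<omega>. (permuted_sample \<omega>)(j := fst \<omega> j)) \<in> measurable triples (MIn n)"
    by (rule measurable_fun_upd_MIn[OF j_less]; measurable)+
  with assms show "exchanged_fst E \<in> measurable triples (MIn n)" "exchanged_snd E \<in> measurable triples (MIn n)"
    unfolding exchanged_fst_def[abs_def] exchanged_snd_def[abs_def]
    by (auto intro!: measurable_If_set)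
qed

definition exchange_plan :: "sample_triple set \<Rightarrow> (nat \<Rightarrow> real) measure" where
  "exchange_plan E = coin_mixture triples (MIn n) (exchanged_fst E) (exchanged_snd E)"

lemma nn_integral_triples_fst:
  "f \<in> borel_measurable (MIn n) \<Longrightarrow> (\<integral>\<^sup>+\<omega>. f (fst \<omega>) \<partial>triples) = integral\<^sup>N \<gamma> f"
  unfolding triples_def using sets_\<gamma>
  by (intro nn_integral_fst_prob_pair prob_space_pair \<gamma>.prob_space_axioms index.prob_space_axioms)
     (simp cong: measurable_cong_sets)

lemma nn_integral_triples_snd:
  assumes "g \<in> borel_measurable (MIn n \<Otimes>\<^sub>M count_space UNIV)"
  shows "(\<integral>\<^sup>+\<omega>. g (snd \<omega>) \<partial>triples) = (\<integral>\<^sup>+m. \<integral>\<^sup>+y. g (y, m) \<partial>\<gamma> \<partial>uniform_index)"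
proof -
  interpret pair_sigma_finite \<gamma> uniform_index ..
  have g: "g \<in> borel_measurable (\<gamma> \<Otimes>\<^sub>M uniform_index)"
    using assms sets_sample_index by (simp cong: measurable_cong_sets)
  have "(\<integral>\<^sup>+\<omega>. g (snd \<omega>) \<partial>triples) = (\<integral>\<^sup>+p. g p \<partial>(\<gamma> \<Otimes>\<^sub>M uniform_index))"
    unfolding triples_def using g
    by (intro nn_integral_snd_prob_pair \<gamma>.prob_space_axioms prob_space_imp_sigma_finite
        prob_space_pair index.prob_space_axioms)
  also have "\<dots> = (\<integral>\<^sup>+m. \<integral>\<^sup>+y. g (y, m) \<partial>\<gamma> \<partial>uniform_index)"
    using nn_integral_snd[OF g] by simp
  finally show ?thesis .
qed

lemma nn_integral_permuted_component:
  assumes "i < n" "S \<in> sets MI"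
  shows "(\<integral>\<^sup>+\<omega>. indicator S (permuted_sample \<omega> i) \<partial>triples) = emeasure \<rho> S"
proof -
  have "(\<lambda>p. indicator S (permuted (fst p) (snd p) i) :: ennreal)
      \<in> borel_measurable (MIn n \<Otimes>\<^sub>M count_space UNIV)"
    using measurable_compose[OF measurable_permuted measurable_component_MIn[OF \<open>i < n\<close>]]
      \<open>S \<in> sets MI\<close> by measurable
  then have "(\<integral>\<^sup>+\<omega>. indicator S (permuted_sample \<omega> i) \<partial>triples)
      = (\<integral>\<^sup>+m. \<integral>\<^sup>+y. indicator S (permuted y m i) \<partial>\<gamma> \<partial>uniform_index)"
    unfolding permuted_sample_def by (subst nn_integral_triples_snd) simp_all
  also have "\<dots> = (\<integral>\<^sup>+m. emeasure \<rho> S \<partial>uniform_index)"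
  proof (rule nn_integral_cong)
    fix m
    define i' where "i' = (if m < n then Transposition.transpose j m i else i)"
    have "i' < n" "\<And>y. permuted y m i = y i'"
      using \<open>i < n\<close> j_less by (auto simp: i'_def permuted_def Transposition.transpose_def)
    then show "(\<integral>\<^sup>+y. indicator S (permuted y m i) \<partial>\<gamma>) = emeasure \<rho> S"
      using nn_integral_plans_component[OF plan _ \<open>S \<in> sets MI\<close>] by simp
  qed
  also have "\<dots> = emeasure \<rho> S"
    by (simp add: index.emeasure_space_1)
  finally show ?thesis .
qed

lemma nn_integral_cost_permuted_sample:
  assumes "assumptionA w"
  shows "(\<integral>\<^sup>+\<omega>. cost w n (permuted_sample \<omega>) \<partial>triples) = integral\<^sup>N \<gamma> (cost w n)"
proof -
  have "(\<integral>\<^sup>+\<omega>. cost w n (permuted_sample \<omega>) \<partial>triples)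
      = (\<integral>\<^sup>+m. \<integral>\<^sup>+y. cost w n y \<partial>\<gamma> \<partial>uniform_index)"
    unfolding permuted_sample_def using assms by (subst nn_integral_triples_snd) simp_all
  also have "\<dots> = integral\<^sup>N \<gamma> (cost w n)"
    by (simp add: index.emeasure_space_1)
  finally show ?thesis .
qed

lemma exchange_plan_in_plans:
  assumes "E \<in> sets triples"
  shows "exchange_plan E \<in> plans n \<rho>"
proof (rule plansI)
  note exchanged = measurable_exchanged[OF assms]
  show "prob_space (exchange_plan E)"
    unfolding exchange_plan_def
    by (rule prob_space_coin_mixture[OF triples.prob_space_axioms exchanged])
  show "sets \<rho> = sets MI" using probI_\<rho> by (simp add: probI_def)
  fix i S assume "i < n" "S \<in> sets MI"
  then have f: "(\<lambda>y. indicator S (y i) :: ennreal) \<in> borel_measurable (MIn n)"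
    using measurable_component_MIn by measurable
  have "(\<integral>\<^sup>+y. indicator S (y i) \<partial>exchange_plan E)
      = (\<integral>\<^sup>+\<omega>. indicator S (exchanged_fst E \<omega> i) + indicator S (exchanged_snd E \<omega> i) \<partial>triples) / 2"
    unfolding exchange_plan_def by (rule nn_integral_coin_mixture[OF exchanged f])
  also have "\<dots> = (\<integral>\<^sup>+\<omega>. indicator S (fst \<omega> i) + indicator S (permuted_sample \<omega> i) \<partial>triples) / 2"
    by (intro arg_cong2[where f="(/)"] nn_integral_cong)
       (auto simp: exchanged_fst_def exchanged_snd_def add.commute)
  also have "\<dots> = ((\<integral>\<^sup>+\<omega>. indicator S (fst \<omega> i) \<partial>triples)
      + (\<integral>\<^sup>+\<omega>. indicator S (permuted_sample \<omega> i) \<partial>triples)) / 2"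
    using measurable_compose[OF measurable_fst_triples f]
      measurable_compose[OF measurable_permuted_sample f] by (simp add: nn_integral_add)
  also have "\<dots> = (emeasure \<rho> S + emeasure \<rho> S) / 2"
    using \<open>i < n\<close> \<open>S \<in> sets MI\<close>
    by (simp add: nn_integral_triples_fst[OF f] nn_integral_permuted_component
        nn_integral_plans_component[OF plan])
  also have "\<dots> = emeasure \<rho> S"
    using mult_divide_eq_ennreal[of 2 "emeasure \<rho> S"] by (simp add: mult_2_right[symmetric])
  finally show "(\<integral>\<^sup>+y. indicator S (y i) \<partial>exchange_plan E) = emeasure \<rho> S" .
qed (simp add: exchange_plan_def)

lemma nn_integral_cost_exchange_plan_less:
  assumes "assumptionA w" and E: "E \<in> sets triples" "emeasure triples E \<noteq> 0"
    and finite: "integral\<^sup>N \<gamma> (cost w n) \<noteq> \<infinity>"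
    and less: "\<And>\<omega>. \<omega> \<in> E \<Longrightarrow> cost w n (exchanged_fst E \<omega>) + cost w n (exchanged_snd E \<omega>)
      < cost w n (fst \<omega>) + cost w n (permuted_sample \<omega>)"
  shows "integral\<^sup>N (exchange_plan E) (cost w n) < integral\<^sup>N \<gamma> (cost w n)"
proof -
  note [measurable] = borel_measurable_cost[OF \<open>assumptionA w\<close>] measurable_exchanged[OF E(1)]
  let ?after = "\<lambda>\<omega>. cost w n (exchanged_fst E \<omega>) + cost w n (exchanged_snd E \<omega>)"
  let ?before = "\<lambda>\<omega>. cost w n (fst \<omega>) + cost w n (permuted_sample \<omega>)"
  have le: "?after \<omega> \<le> ?before \<omega>" for \<omega>
    using less[of \<omega>] by (cases "\<omega> \<in> E") (auto simp: exchanged_fst_def exchanged_snd_def)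
  have before: "integral\<^sup>N triples ?before = integral\<^sup>N \<gamma> (cost w n) + integral\<^sup>N \<gamma> (cost w n)"
    using \<open>assumptionA w\<close>
    by (simp add: nn_integral_add nn_integral_triples_fst nn_integral_cost_permuted_sample)
  have "integral\<^sup>N triples ?after < integral\<^sup>N triples ?before"
  proof (rule nn_integral_less)
    show "integral\<^sup>N triples ?after \<noteq> \<infinity>"
      using nn_integral_mono[where M=triples and u="?after" and v="?before"] le before finite
      by (auto simp: top_unique)
    show "\<not> (AE \<omega> in triples. ?before \<omega> \<le> ?after \<omega>)"
    proof
      assume "AE \<omega> in triples. ?before \<omega> \<le> ?after \<omega>"
      then have "AE \<omega> in triples. \<omega> \<notin> E"
        by (rule AE_mp, intro AE_I2) (meson less leD)
      with E show False
        by (subst (asm) AE_iff_measurable[of E]) (auto dest: sets.sets_into_space)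
    qed
  qed (use le in auto)
  then show ?thesis
    unfolding exchange_plan_def using before
    by (simp add: nn_integral_coin_mixture measurable_exchanged[OF E(1)] divide_less_ennreal
        mult_2_right)
qed

end

section \<open>A heavy pair contradicts optimality\<close>

lemma sets_tdist_ball_MI: "{t \<in> Iint. tdist a t < r} \<in> sets MI"
proof -
  have "(\<lambda>t. tdist a t) \<in> borel_measurable MI"
    using measurable_MI_borel by measurable
  then have "{t \<in> space MI. tdist a t < r} \<in> sets MI" by measurable
  then show ?thesis by (simp add: space_MI)
qed

lemma measure_tdist_ball_le_kappa:
  assumes "finite_measure \<rho>" "a \<in> Iint"
  shows "measure \<rho> {t \<in> Iint. tdist a t < r} \<le> kappa \<rho> r"
  unfolding kappa_def
proof (rule cSUP_upper[OF \<open>a \<in> Iint\<close>])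
  interpret finite_measure \<rho> by fact
  show "bdd_above ((\<lambda>x. measure \<rho> {y \<in> Iint. tdist x y < r}) ` Iint)"
    by (rule bdd_aboveI[where M="measure \<rho> (space \<rho>)"]) (auto intro: bounded_measure)
qed

locale heavy_pair = exchange_setting n j \<rho> \<gamma>
  for n j :: nat and \<rho> :: "real measure" and \<gamma> :: "(nat \<Rightarrow> real) measure" +
  fixes w :: "real \<Rightarrow> real \<Rightarrow> ennreal" and r \<beta> h :: real and k :: nat
  assumes A: "assumptionA w"
    and optimal: "(\<integral>\<^sup>+ x. cost w n x \<partial>\<gamma>) = F_OT w n \<rho>"
    and kappa_less: "kappa \<rho> r < 1 / real n"
    and threshold: "ennreal h > 2 * of_nat (n - 1) * M_w w (\<beta> / 2)"
    and short_range: "m_w w \<beta> > F_OT w n \<rho> / ennreal (1 - real n * kappa \<rho> r)"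
    and half_\<beta>_le_r: "\<beta> / 2 \<le> r"
    and k_less: "k < n" and j_neq_k: "j \<noteq> k"
begin

lemma F_OT_finite: "F_OT w n \<rho> \<noteq> \<infinity>"
  using short_range
  by (metis ennreal_divide_eq_top_iff ennreal_neq_top infinity_ennreal_def neq_top_trans nless_le)

lemma one_minus_n_kappa_pos: "0 < 1 - real n * kappa \<rho> r"
  using kappa_less j_less by (simp add: field_simps)

lemma borel_measurable_cost_\<gamma>: "cost w n \<in> borel_measurable \<gamma>"
  using borel_measurable_cost[OF A] sets_\<gamma> by (simp cong: measurable_cong_sets)

definition far :: "real \<Rightarrow> (nat \<Rightarrow> real) set" where
  "far a = {y \<in> space (MIn n). \<forall>l<n. r \<le> tdist a (y l)}"

lemma sets_far: "far a \<in> sets (MIn n)"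
proof -
  have "far a = space (MIn n) \<inter> (\<Inter>l\<in>{..<n}. {y \<in> space (MIn n). r \<le> tdist a (y l)})"
    unfolding far_def using j_less by auto
  also have "\<dots> \<in> sets (MIn n)"
  proof (intro sets.Int sets.top sets.finite_INT finite_lessThan ballI)
    fix l show "{y \<in> space (MIn n). r \<le> tdist a (y l)} \<in> sets (MIn n)" by measurable
  qed (use j_less in auto)
  finally show ?thesis .
qed

lemma measure_not_far_le:
  assumes "a \<in> Iint"
  shows "measure \<gamma> (space \<gamma> - far a) \<le> real n * kappa \<rho> r"
proof -
  let ?ball = "{t \<in> Iint. tdist a t < r}"
  have component: "(\<lambda>y. y l) \<in> measurable \<gamma> MI" if "l < n" for l
    using measurable_component_MIn[OF that] sets_\<gamma> by (simp cong: measurable_cong_sets)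
  have "space \<gamma> - far a = (\<Union>l\<in>{..<n}. (\<lambda>y. y l) -` ?ball \<inter> space \<gamma>)"
    unfolding far_def sets_eq_imp_space_eq[OF sets_\<gamma>] by (auto simp: space_MIn not_le)
  also have "measure \<gamma> \<dots> \<le> (\<Sum>l<n. measure \<gamma> ((\<lambda>y. y l) -` ?ball \<inter> space \<gamma>))"
    using measurable_sets[OF component sets_tdist_ball_MI]
    by (intro \<gamma>.finite_measure_subadditive_finite) blast+
  also have "\<dots> = (\<Sum>l<n. measure \<rho> ?ball)"
    using plan component sets_tdist_ball_MI by (intro sum.cong) (auto simp: plans_def measure_distr)
  also have "\<dots> \<le> (\<Sum>l<n. kappa \<rho> r)"
    using probI_\<rho> assms
    by (intro sum_mono measure_tdist_ball_le_kappa) (auto simp: probI_def prob_space_def)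
  finally show ?thesis by simp
qed

definition heavy :: "(nat \<Rightarrow> real) set" where
  "heavy = {x \<in> space (MIn n). cost w n x \<noteq> \<infinity> \<and> ennreal h < w (x j) (x k)}"

definition cheap :: "(nat \<Rightarrow> real) set" where
  "cheap = {y \<in> space (MIn n). cost w n y < m_w w \<beta>}"

lemma sets_heavy: "heavy \<in> sets (MIn n)"
  unfolding heavy_def using A j_less k_less by measurable

lemma sets_cheap: "cheap \<in> sets (MIn n)"
  unfolding cheap_def using A by measurable

lemma cheap_separated:
  assumes "y \<in> cheap" "a < n" "b < n" "a \<noteq> b"
  shows "\<beta> < tdist (y a) (y b)"
proof (rule ccontr)
  assume "\<not> \<beta> < tdist (y a) (y b)"
  moreover have "y a \<in> Iint" "y b \<in> Iint"
    using assms by (auto simp: cheap_def space_MIn)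
  ultimately have "m_w w \<beta> \<le> w (y a) (y b)"
    unfolding m_w_def by (intro INF_lower2[where i="(y a, y b)"]) auto
  also have "\<dots> \<le> cost w n y" by (rule pair_le_cost[OF assms(2-4)])
  finally have "m_w w \<beta> \<le> cost w n y" .
  with \<open>y \<in> cheap\<close> show False by (simp add: cheap_def not_less[symmetric])
qed

lemma measure_cheap_gt: "real n * kappa \<rho> r < measure \<gamma> cheap"
proof -
  let ?q = "1 - real n * kappa \<rho> r"
  let ?costly = "space \<gamma> - cheap"
  have costly: "?costly \<in> sets \<gamma>" using sets_cheap sets_\<gamma> by auto
  have "m_w w \<beta> * emeasure \<gamma> ?costly = (\<integral>\<^sup>+y. m_w w \<beta> * indicator ?costly y \<partial>\<gamma>)"
    using costly by (simp add: nn_integral_cmult_indicator)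
  also have "\<dots> \<le> (\<integral>\<^sup>+y. cost w n y \<partial>\<gamma>)"
    by (intro nn_integral_mono)
       (auto simp: cheap_def indicator_def not_less sets_eq_imp_space_eq[OF sets_\<gamma>])
  also have "\<dots> < m_w w \<beta> * ennreal ?q"
    using optimal short_range one_minus_n_kappa_pos by (simp add: divide_less_ennreal)
  finally have "emeasure \<gamma> ?costly < ennreal ?q"
    by (metis mult_left_mono not_le zero_le)
  then have "measure \<gamma> ?costly < ?q"
    using one_minus_n_kappa_pos by (simp add: \<gamma>.emeasure_eq_measure ennreal_less_iff)
  then show ?thesis
    using sets_cheap sets_\<gamma> by (simp add: \<gamma>.prob_compl)
qed

lemma measure_cheap_far_pos:
  assumes "a \<in> Iint"
  shows "0 < measure \<gamma> (cheap \<inter> far a)"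
proof -
  have "measure \<gamma> cheap \<le> measure \<gamma> ((cheap \<inter> far a) \<union> (space \<gamma> - far a))"
    using sets_cheap sets_far sets_\<gamma>
    by (intro \<gamma>.finite_measure_mono) (auto simp: cheap_def sets_eq_imp_space_eq[OF sets_\<gamma>])
  also have "\<dots> \<le> measure \<gamma> (cheap \<inter> far a) + measure \<gamma> (space \<gamma> - far a)"
    using sets_cheap sets_far sets_\<gamma> by (intro measure_Un_le) auto
  finally show ?thesis
    using measure_not_far_le[OF assms] measure_cheap_gt by simp
qed

(* Drawing the index m at random, instead of selecting the far point y_m measurably, only
   costs a factor 1/n in probability. *)
definition exchange_event :: "sample_triple set" where
  "exchange_event = {\<omega> \<in> space triples. snd (snd \<omega>) < n \<and> fst \<omega> \<in> heavy \<and> fst (snd \<omega>) \<in> cheap \<and>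
     (\<forall>l<n. r \<le> tdist (fst \<omega> j) (fst (snd \<omega>) l)) \<and>
     (\<forall>l<n. l \<noteq> j \<longrightarrow> \<beta> / 2 \<le> tdist (permuted_sample \<omega> j) (fst \<omega> l))}"

lemma sets_exchange_event: "exchange_event \<in> sets triples"
  unfolding exchange_event_def using sets_heavy sets_cheap by measurable

lemma emeasure_exchange_event_neq_0:
  assumes "emeasure \<gamma> heavy \<noteq> 0"
  shows "emeasure triples exchange_event \<noteq> 0"
  unfolding triples_def
proof (rule emeasure_pair_measure_neq_0_if_slices)
  show "exchange_event \<in> sets (\<gamma> \<Otimes>\<^sub>M (\<gamma> \<Otimes>\<^sub>M uniform_index))"
    using sets_exchange_event by (simp add: triples_def)
  show "heavy \<in> sets \<gamma>" using sets_heavy sets_\<gamma> by simp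
  fix x assume "x \<in> heavy"
  then have x: "x \<in> space (MIn n)" "x j \<in> Iint"
    using j_less by (auto simp: heavy_def space_MIn)
  show "emeasure (\<gamma> \<Otimes>\<^sub>M uniform_index) (Pair x -` exchange_event) \<noteq> 0"
  proof (rule emeasure_pair_measure_neq_0_if_slices)
    show "Pair x -` exchange_event \<in> sets (\<gamma> \<Otimes>\<^sub>M uniform_index)"
      using sets_exchange_event unfolding triples_def by (rule sets_Pair1)
    show "cheap \<inter> far (x j) \<in> sets \<gamma>" using sets_cheap sets_far sets_\<gamma> by simp
    show "emeasure \<gamma> (cheap \<inter> far (x j)) \<noteq> 0"
      using measure_cheap_far_pos[OF x(2)] by (simp add: \<gamma>.emeasure_eq_measure)
    fix y assume y: "y \<in> cheap \<inter> far (x j)"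
    then have "\<beta> < tdist (y a) (y b)" if "a < n" "b < n" "a \<noteq> b" for a b
      using cheap_separated that by blast
    then obtain m where "m < n" and m: "\<forall>l<n. l \<noteq> j \<longrightarrow> \<beta> / 2 \<le> tdist (y m) (x l)"
      using pigeonhole_far_point[OF j_less] by blast
    with \<open>x \<in> heavy\<close> x y have "{m} \<subseteq> Pair y -` Pair x -` exchange_event"
      by (auto simp: exchange_event_def permuted_sample_def permuted_at_j triples_def
          space_pair_measure uniform_index_def far_def cheap_def sets_eq_imp_space_eq[OF sets_\<gamma>])
    then have "emeasure uniform_index {m} \<le> emeasure uniform_index (Pair y -` Pair x -` exchange_event)"
      by (intro emeasure_mono) (auto simp: uniform_index_def)
    moreover have "emeasure uniform_index {m} = ennreal (1 / real n)"
      using \<open>m < n\<close> by (simp add: uniform_index_def emeasure_pmf_single) (subst pmf_of_set; auto)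
    ultimately show "emeasure uniform_index (Pair y -` Pair x -` exchange_event) \<noteq> 0"
      using \<open>m < n\<close> by auto
  qed (rule index.sigma_finite_measure_axioms)
qed (use assms in \<open>auto intro: prob_space_imp_sigma_finite prob_space_pair
    \<gamma>.prob_space_axioms index.prob_space_axioms\<close>)

lemma exchange_event_cost_less:
  assumes "\<omega> \<in> exchange_event"
  shows "cost w n (exchanged_fst exchange_event \<omega>) + cost w n (exchanged_snd exchange_event \<omega>)
    < cost w n (fst \<omega>) + cost w n (permuted_sample \<omega>)"
proof -
  obtain x y m where \<omega>: "\<omega> = (x, y, m)" by (cases \<omega>)
  define z where "z = permuted y m"
  have "x \<in> heavy" "y \<in> cheap" and far: "\<And>l. l < n \<Longrightarrow> r \<le> tdist (x j) (y l)"
    and far_z: "\<And>l. l < n \<Longrightarrow> l \<noteq> j \<Longrightarrow> \<beta> / 2 \<le> tdist (z j) (x l)"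
    using assms by (auto simp: exchange_event_def \<omega> z_def permuted_sample_def)
  then have x: "\<And>l. l < n \<Longrightarrow> x l \<in> Iint" and z: "\<And>l. l < n \<Longrightarrow> z l \<in> Iint"
    using permuted_in_space[of y m] by (auto simp: heavy_def cheap_def space_MIn z_def)
  have M_bound: "w a b \<le> M_w w (\<beta> / 2)" if "a \<in> Iint" "b \<in> Iint" "\<beta> / 2 \<le> tdist a b" for a b
    unfolding M_w_def using that by (intro SUP_upper2[where i="(a, b)"]) auto
  have bound: "w (z j) (x l) \<le> M_w w (\<beta> / 2) \<and> w (x l) (z j) \<le> M_w w (\<beta> / 2) \<and>
      w (x j) (z l) \<le> M_w w (\<beta> / 2) \<and> w (z l) (x j) \<le> M_w w (\<beta> / 2)"
    if l: "l \<in> {..<n} - {j}" for l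
  proof -
    obtain i where "i < n" "z l = y i"
      using permuted_component[of l y m] l by (auto simp: z_def)
    then have "\<beta> / 2 \<le> tdist (x j) (z l)" using far half_\<beta>_le_r by fastforce
    then show ?thesis
      using l far_z[of l] j_less x z M_bound by (auto simp: tdist_commute)
  qed
  have "w (x k) (x j) = w (x j) (x k)"
    using A x j_less k_less by (simp add: assumptionA_def)
  moreover have "2 * of_nat (n - 1) * M_w w (\<beta> / 2) < w (x j) (x k)"
    using threshold \<open>x \<in> heavy\<close> by (auto simp: heavy_def)
  moreover have "cost w n x \<noteq> \<infinity>" "cost w n z \<noteq> \<infinity>"
    using \<open>x \<in> heavy\<close> \<open>y \<in> cheap\<close> by (auto simp: heavy_def cheap_def z_def)
  ultimately have "cost w n (x(j := z j)) + cost w n (z(j := x j)) < cost w n x + cost w n z"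
    using bound by (intro cost_exchange_less[OF j_less k_less j_neq_k]) auto
  then show ?thesis
    using assms by (simp add: exchanged_fst_def exchanged_snd_def \<omega> z_def permuted_sample_def)
qed

lemma sets_heavy_pair: "{x \<in> space (MIn n). ennreal h < w (x j) (x k)} \<in> sets (MIn n)"
  using A j_less k_less by measurable

lemma heavy_pair_null: "emeasure \<gamma> {x \<in> space (MIn n). ennreal h < w (x j) (x k)} = 0"
proof (rule ccontr)
  assume "emeasure \<gamma> {x \<in> space (MIn n). ennreal h < w (x j) (x k)} \<noteq> 0"
  moreover have "AE x in \<gamma>. cost w n x \<noteq> \<infinity>"
    using nn_integral_noteq_infinite[OF borel_measurable_cost_\<gamma>] optimal F_OT_finite by simp
  then have "emeasure \<gamma> heavy = emeasure \<gamma> {x \<in> space (MIn n). ennreal h < w (x j) (x k)}"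
    using sets_heavy sets_\<gamma> A j_less k_less
    by (intro emeasure_eq_AE) (auto simp: heavy_def elim!: AE_mp)
  ultimately have "emeasure triples exchange_event \<noteq> 0"
    by (intro emeasure_exchange_event_neq_0) simp
  then have "integral\<^sup>N (exchange_plan exchange_event) (cost w n) < F_OT w n \<rho>"
    using nn_integral_cost_exchange_plan_less[OF A sets_exchange_event] exchange_event_cost_less
      optimal F_OT_finite by simp
  moreover have "F_OT w n \<rho> \<le> integral\<^sup>N (exchange_plan exchange_event) (cost w n)"
    unfolding F_OT_def by (rule INF_lower[OF exchange_plan_in_plans[OF sets_exchange_event]])
  ultimately show False by simp
qed

end

theorem lemma4p1:
  fixes w :: "real \<Rightarrow> real \<Rightarrow> ennreal" and n :: nat and \<rho> :: "real measure"
    and \<gamma> :: "(nat \<Rightarrow> real) measure" and r \<beta> h :: real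
  assumes "assumptionA w"
    and "probI \<rho>"
    and "r > 0"
    and "\<gamma> \<in> plans n \<rho>"
    and "(\<integral>\<^sup>+ x. cost w n x \<partial>\<gamma>) = F_OT w n \<rho>"
    and "kappa \<rho> r < 1 / real n"
    and "\<beta> > 0" and "h > 0"
    and "ennreal h > 2 * of_nat (n - 1) * M_w w (\<beta> / 2)"
    and "m_w w \<beta> > F_OT w n \<rho> / ennreal (1 - real n * kappa \<rho> r)"
    and "\<beta> / 2 \<le> r"
  shows "Dset w n h \<in> sets \<gamma> \<and> emeasure \<gamma> (Dset w n h) = 0"
proof -
  have sets_\<gamma>: "sets \<gamma> = sets (MIn n)" using assms(4) by (simp add: plans_def)
  have heavy_null: "{x \<in> space (MIn n). ennreal h < w (x j) (x k)} \<in> null_sets \<gamma>"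
    if "j < n" "k \<in> {..<n} - {j}" for j k
  proof -
    interpret heavy_pair n j \<rho> \<gamma> w r \<beta> h k
      using assms that by unfold_locales auto
    show ?thesis
      using heavy_pair_null sets_heavy_pair sets_\<gamma> by (simp add: null_sets_def)
  qed
  let ?heavy_pairs = "\<Union>j<n. \<Union>k\<in>{..<n} - {j}. {x \<in> space (MIn n). ennreal h < w (x j) (x k)}"
  have null: "?heavy_pairs \<in> null_sets \<gamma>"
    by (intro null_sets.finite_UN ballI heavy_null) auto
  have "Dset w n h \<subseteq> ?heavy_pairs"
    unfolding Dset_def by blast
  then have "emeasure \<gamma> (Dset w n h) \<le> emeasure \<gamma> ?heavy_pairs"
    using null by (intro emeasure_mono) auto
  then show ?thesis
    using null sets_Dset[OF assms(1)] sets_\<gamma> by (simp add: null_sets_def)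
qed

end
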